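(* Let $D\ge 2$ be an integer and $n\ge 1$. Let $\mathcal{C}\subseteq(\mathbb{C}^D)^{\otimes n}$ be an $n$-qudit stabilizer code of dimension $K\ge 1$, with stabilizer $\mathcal{S}\subseteq\mathcal{P}_n$. Then $$K\cdot|\mathcal{S}| = D^n,$$ where $|\mathcal{S}|$ is the order of the group $\mathcal{S}$. In particular, $K$ is a divisor of $D^n$ (not necessarily a power of $D$ when $D$ is composite).
   Context: Fix an integer $D\ge2$, let $\omega=e^{2\pi i/D}$, and let all integer arithmetic be modulo $D$. On $\mathbb{C}^D$ with basis $\{|j\rangle\}_{j=0}^{D-1}$ define $Z=\sum_{j}\omega^j|j\rangle\langle j|$ and $X=\sum_j |j\rangle\langle j+1|$ (indices mod $D$), so $X^D=Z^D=I$ and $XZ=\omega ZX$. For $n$ qudits, a Pauli product is an operator $\omega^{\lambda}X_1^{x_1}Z_1^{z_1}\otimes\cdots\otimes X_n^{x_n}Z_n^{z_n}$ with $\lambda\in\mathbb{Z}_D$ and $\mathbf{x},\mathbf{z}\in\mathbb{Z}_D^n$; these form a group $\mathcal{P}_n$ (the generalized Pauli group) under multiplication. A stabilizer code is a subspace $\mathcal{C}$ of $(\mathbb{C}^D)^{\otimes n}$ of dimension $K\ge1$ such that: (C1) there is a subgroup $\mathcal{S}\le\mathcal{P}_n$ with $s|\psi\rangle=|\psi\rangle$ for all $s\in\mathcal{S}$ and all $|\psi\rangle\in\mathcal{C}$; (C2) $\mathcal{S}$ is maximal: every $s\in\mathcal{P}_n$ fixing every vector of $\mathcal{C}$ lies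 in $\mathcal{S}$; (C3) $\mathcal{C}$ is maximal: every vector fixed by all $s\in\mathcal{S}$ lies in $\mathcal{C}$. Then $\mathcal{S}$ is called the stabilizer of $\mathcal{C}$ (it is necessarily abelian). *)

theory Defs
  imports Complex_Main "HOL-Library.Function_Algebras" "HOL-Algebra.Group"
begin

text \<open>States of n qudits of dimension D: the computational basis is indexed by
  functions k :: nat => nat with k i < D for i < n and k i = 0 for i >= n.\<close>

definition basis_labels :: "nat \<Rightarrow> nat \<Rightarrow> (nat \<Rightarrow> nat) set" where
  "basis_labels D n = {k. (\<forall>i<n. k i < D) \<and> (\<forall>i\<ge>n. k i = 0)}"

definition qudit_space :: "nat \<Rightarrow> nat \<Rightarrow> ((nat \<Rightarrow> nat) \<Rightarrow> complex) set" where
  "qudit_space D n = {psi. \<forall>k. k \<notin> basis_labels D n \<longrightarrow> psi k = 0}"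

definition cscale :: "complex \<Rightarrow> ((nat \<Rightarrow> nat) \<Rightarrow> complex) \<Rightarrow> ((nat \<Rightarrow> nat) \<Rightarrow> complex)" where
  "cscale c psi = (\<lambda>k. c * psi k)"

definition omega :: "nat \<Rightarrow> complex" where
  "omega D = cis (2 * pi / real D)"

definition label_shift :: "nat \<Rightarrow> nat \<Rightarrow> (nat \<Rightarrow> nat) \<Rightarrow> (nat \<Rightarrow> nat) \<Rightarrow> (nat \<Rightarrow> nat)" where
  "label_shift D n k x = (\<lambda>i. if i < n then (k i + x i) mod D else 0)"

text \<open>The Pauli product omega^l X_1^{x_1} Z_1^{z_1} ... X_n^{x_n} Z_n^{z_n}, with
  Z|j> = omega^j |j> and X|j+1> = |j>; hence
  (X^x Z^z) |j> = omega^(z j) |j - x> and the amplitude of |k> in P psi is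
  omega^(l + sum_i z_i (k_i + x_i)) psi(k + x).\<close>
definition pauli_op :: "nat \<Rightarrow> nat \<Rightarrow> nat \<Rightarrow> (nat \<Rightarrow> nat) \<Rightarrow> (nat \<Rightarrow> nat)
    \<Rightarrow> ((nat \<Rightarrow> nat) \<Rightarrow> complex) \<Rightarrow> ((nat \<Rightarrow> nat) \<Rightarrow> complex)" where
  "pauli_op D n l x z psi = (\<lambda>k. if k \<in> basis_labels D n then
       omega D ^ (l + (\<Sum>i<n. z i * ((k i + x i) mod D))) * psi (label_shift D n k x)
     else 0)"

definition pauli_group :: "nat \<Rightarrow> nat \<Rightarrow>
    (((nat \<Rightarrow> nat) \<Rightarrow> complex) \<Rightarrow> ((nat \<Rightarrow> nat) \<Rightarrow> complex)) monoid" where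
  "pauli_group D n = \<lparr> carrier = {pauli_op D n l x z | l x z. True},
                       mult = (\<circ>),
                       one = pauli_op D n 0 (\<lambda>_. 0) (\<lambda>_. 0) \<rparr>"

definition is_stabilizer_code ::
  "nat \<Rightarrow> nat \<Rightarrow> ((nat \<Rightarrow> nat) \<Rightarrow> complex) set
     \<Rightarrow> (((nat \<Rightarrow> nat) \<Rightarrow> complex) \<Rightarrow> ((nat \<Rightarrow> nat) \<Rightarrow> complex)) set \<Rightarrow> bool" where
  "is_stabilizer_code D n C S \<longleftrightarrow>
     C \<subseteq> qudit_space D n \<and> module.subspace cscale C \<and>
     subgroup S (pauli_group D n) \<and>
     (\<forall>s\<in>S. \<forall>psi\<in>C. s psi = psi) \<and>
     (\<forall>s\<in>carrier (pauli_group D n). (\<forall>psi\<in>C. s psi = psi) \<longrightarrow> s \<in> S) \<and>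
     (\<forall>psi\<in>qudit_space D n. (\<forall>s\<in>S. s psi = psi) \<longrightarrow> psi \<in> C)"

end

theory Submission imports Defs "HOL-Number_Theory.Cong" begin

(* Proof idea: let P be the averaging operator  P = (1/|S|) * sum_{s in S} s.
   Since S is a finite group fixing C pointwise, and C contains every state
   fixed by S, P maps every state into C and is the identity on C: P is a
   linear projection onto C, so its trace is dim C = K.
   On the other hand tr P is the average of the traces of the elements of S.
   A Pauli operator with nontrivial X-part has zero diagonal; a diagonal one
   with nontrivial Z-part has trace 0, because shifting one label permutes
   the basis and multiplies the trace by a root of unity omega^z <> 1; and a
   scalar Pauli in S equals the identity, since S fixes a nonzero vector.
   Hence only the identity contributes, with trace D^n, and K = D^n / |S|. *)

type_synonym state = "(nat \<Rightarrow> nat) \<Rightarrow> complex"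

interpretation cs: vector_space cscale
  by unfold_locales (auto simp: cscale_def fun_eq_iff algebra_simps)

lemma omega_pow_eq_1:
  assumes "D > 0"
  shows "omega D ^ m = 1 \<longleftrightarrow> D dvd m"
proof
  assume h: "omega D ^ m = 1"
  have "cis (real m * (2 * pi / real D)) = 1" using h by (simp add: omega_def DeMoivre)
  then have "cos (real m * (2 * pi / real D)) = 1" by (simp add: complex_eq_iff)
  then obtain k :: int where k: "real m * (2 * pi / real D) = k * 2 * pi"
    by (auto simp: cos_one_2pi_int)
  then have "real m = real_of_int k * real D" using assms by (simp add: field_simps)
  then have "int m = k * int D" by (metis of_int_eq_iff of_int_mult of_int_of_nat_eq)
  then show "D dvd m" by (metis dvd_triv_right int_dvd_int_iff)
next
  assume "D dvd m"
  then obtain q where q: "m = D * q" by auto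
  have "real m * (2 * pi / real D) = 2 * pi * real q" using assms q by (simp add: field_simps)
  then show "omega D ^ m = 1" by (simp add: omega_def DeMoivre)
qed

lemma omega_pow_cong:
  assumes "D > 0" "a mod D = b mod D"
  shows "omega D ^ a = omega D ^ b"
proof -
  have "omega D ^ m = omega D ^ (m mod D)" for m
  proof -
    have "omega D ^ m = (omega D ^ D) ^ (m div D) * omega D ^ (m mod D)"
      by (metis mult_div_mod_eq power_add power_mult)
    moreover have "omega D ^ D = 1" using omega_pow_eq_1[OF assms(1)] by simp
    ultimately show ?thesis by simp
  qed
  then show ?thesis using assms(2) by metis
qed

lemma omega_nz: "omega D \<noteq> 0"
  by (simp add: omega_def)

lemma mod_cancel_nat:
  fixes a b c D :: nat
  assumes "(a + b) mod D = (a + c) mod D"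
  shows "b mod D = c mod D"
  using assms cong_add_lcancel_nat[of a b c D] unfolding cong_def by simp

lemma sum_fun_apply: "(\<Sum>i\<in>I. f i) k = (\<Sum>i\<in>I. (f i) k)"
  by (induction I rule: infinite_finite_induct) auto

lemma basis_labels_bij_PiE:
  "bij_betw (\<lambda>k. restrict k {..<n}) (basis_labels D n) (\<Pi>\<^sub>E i\<in>{..<n}. {..<D})"
proof (rule bij_betw_byWitness[where f' = "\<lambda>f i. if i < n then f i else 0"])
  show "\<forall>a\<in>basis_labels D n. (\<lambda>i. if i < n then restrict a {..<n} i else 0) = a"
    by (auto simp: basis_labels_def fun_eq_iff)
  show "\<forall>a'\<in>\<Pi>\<^sub>E i\<in>{..<n}. {..<D}. restrict (\<lambda>i. if i < n then a' i else 0) {..<n} = a'"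
    by (auto simp: fun_eq_iff PiE_def extensional_def)
  show "(\<lambda>k. restrict k {..<n}) ` basis_labels D n \<subseteq> (\<Pi>\<^sub>E i\<in>{..<n}. {..<D})"
    unfolding basis_labels_def by (intro image_subsetI) (simp add: restrict_PiE_iff)
  show "(\<lambda>f i. if i < n then f i else 0) ` (\<Pi>\<^sub>E i\<in>{..<n}. {..<D}) \<subseteq> basis_labels D n"
    by (auto simp: basis_labels_def PiE_def Pi_def)
qed

lemma card_basis_labels: "card (basis_labels D n) = D ^ n"
  using bij_betw_same_card[OF basis_labels_bij_PiE] by (simp add: card_PiE)

lemma finite_basis_labels: "D > 0 \<Longrightarrow> finite (basis_labels D n)"
  using bij_betw_finite[OF basis_labels_bij_PiE] by (simp add: finite_PiE)

lemma label_shift_in_basis_labels: "D > 0 \<Longrightarrow> label_shift D n k x \<in> basis_labels D n"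
  by (auto simp: label_shift_def basis_labels_def)

definition basis_vec :: "(nat \<Rightarrow> nat) \<Rightarrow> state" where
  "basis_vec k0 = (\<lambda>k. if k = k0 then 1 else 0)"

lemma basis_expansion:
  assumes "D > 0" "b \<in> qudit_space D n"
  shows "(\<Sum>k\<in>basis_labels D n. cscale (b k) (basis_vec k)) = b"
proof
  fix q
  have "(\<Sum>k\<in>basis_labels D n. cscale (b k) (basis_vec k)) q
      = (\<Sum>k\<in>basis_labels D n. if k = q then b q else 0)"
    unfolding sum_fun_apply by (intro sum.cong) (auto simp: cscale_def basis_vec_def)
  also have "\<dots> = b q"
    using assms(2) by (auto simp: qudit_space_def finite_basis_labels[OF assms(1)])
  finally show "(\<Sum>k\<in>basis_labels D n. cscale (b k) (basis_vec k)) q = b q" .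
qed

text \<open>So the n-qudit space is spanned by finitely many basis states; this bounds the
  size of every independent set of states.\<close>

lemma qudit_space_finite_span:
  assumes "D > 0"
  shows "qudit_space D n \<subseteq> cs.span (basis_vec ` basis_labels D n)"
proof
  fix b assume "b \<in> qudit_space D n"
  then have "b = (\<Sum>k\<in>basis_labels D n. cscale (b k) (basis_vec k))"
    using basis_expansion[OF assms] by simp
  also have "\<dots> \<in> cs.span (basis_vec ` basis_labels D n)"
    by (intro cs.span_sum cs.span_scale cs.span_base) auto
  finally show "b \<in> cs.span (basis_vec ` basis_labels D n)" .
qed

lemma pauli_in_qudit_space: "pauli_op D n l x z psi \<in> qudit_space D n"
  by (auto simp: pauli_op_def qudit_space_def)

lemma pauli_sum: "pauli_op D n l x z (\<Sum>i\<in>I. f i) = (\<Sum>i\<in>I. pauli_op D n l x z (f i))"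
  by (auto simp: pauli_op_def fun_eq_iff sum_fun_apply sum_distrib_left)

lemma pauli_scale: "pauli_op D n l x z (cscale c psi) = cscale c (pauli_op D n l x z psi)"
  by (auto simp: pauli_op_def fun_eq_iff cscale_def)

lemma pauli_lincomb:
  "pauli_op D n l x z (\<Sum>k\<in>A. cscale (c k) (f k))
     = (\<Sum>k\<in>A. cscale (c k) (pauli_op D n l x z (f k)))"
  by (simp add: pauli_sum pauli_scale)

lemma pauli_normalize:
  assumes "D > 0"
  shows "pauli_op D n l x z = pauli_op D n (l mod D) (\<lambda>i. if i<n then x i mod D else 0)
            (\<lambda>i. if i<n then z i mod D else 0)"
proof (intro ext)
  fix psi k
  have ls: "label_shift D n k (\<lambda>i. if i<n then x i mod D else 0) = label_shift D n k x"
    by (auto simp: label_shift_def fun_eq_iff mod_simps)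
  have s1: "(\<Sum>i<n. (if i<n then z i mod D else 0) * ((k i + (if i<n then x i mod D else 0)) mod D))
      = (\<Sum>i<n. (z i mod D) * ((k i + x i mod D) mod D))"
    by (intro sum.cong) auto
  have a: "(\<Sum>i<n. z i * ((k i + x i) mod D)) mod D
      = (\<Sum>i<n. (z i mod D) * ((k i + x i) mod D)) mod D"
    by (subst (1 2) mod_sum_eq[symmetric]) (simp add: mod_mult_left_eq)
  have "(l + (\<Sum>i<n. z i * ((k i + x i) mod D))) mod D =
     (l mod D + (\<Sum>i<n. (if i<n then z i mod D else 0)
        * ((k i + (if i<n then x i mod D else 0)) mod D))) mod D"
    unfolding s1 by (simp add: mod_simps) (rule mod_add_cong[OF refl a])
  then have "omega D ^ (l + (\<Sum>i<n. z i * ((k i + x i) mod D))) =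
     omega D ^ (l mod D + (\<Sum>i<n. (if i<n then z i mod D else 0)
        * ((k i + (if i<n then x i mod D else 0)) mod D)))"
    by (rule omega_pow_cong[OF assms])
  then show "pauli_op D n l x z psi k = pauli_op D n (l mod D) (\<lambda>i. if i<n then x i mod D else 0)
            (\<lambda>i. if i<n then z i mod D else 0) psi k"
    unfolding pauli_op_def ls by simp
qed

lemma finite_pauli_group:
  assumes "D > 0"
  shows "finite (carrier (pauli_group D n))"
proof -
  let ?T = "{..<D} \<times> basis_labels D n \<times> basis_labels D n"
  have "carrier (pauli_group D n) \<subseteq> (\<lambda>(l,x,z). pauli_op D n l x z) ` ?T"
  proof
    fix s assume "s \<in> carrier (pauli_group D n)"
    then obtain l x z where s: "s = pauli_op D n l x z" by (auto simp: pauli_group_def)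
    show "s \<in> (\<lambda>(l,x,z). pauli_op D n l x z) ` ?T"
    proof (rule image_eqI[where x = "(l mod D, (\<lambda>i. if i<n then x i mod D else 0),
            (\<lambda>i. if i<n then z i mod D else 0))"])
      show "(l mod D, (\<lambda>i. if i<n then x i mod D else 0),
            (\<lambda>i. if i<n then z i mod D else 0)) \<in> ?T"
        using assms by (simp add: basis_labels_def)
    qed (unfold s split, rule pauli_normalize[OF assms])
  qed
  moreover have "finite ?T" using finite_basis_labels[OF assms] by auto
  ultimately show ?thesis by (rule finite_surj[rotated])
qed

lemma label_shift_inverse:
  assumes "D > 0" "k \<in> basis_labels D n"
  shows "label_shift D n (label_shift D n k (\<lambda>i. D - x i mod D)) x = k"
proof -
  have "((a + D - b mod D) mod D + b) mod D = a" if "a < D" for a b :: nat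
  proof -
    have "a + D - b mod D + b = (a + D) + D * (b div D)"
      using mod_less_divisor[OF assms(1), of b] mod_mult_div_eq[of b D] by linarith
    then show ?thesis using that by (simp add: mod_add_left_eq)
  qed
  then show ?thesis using assms by (auto simp: label_shift_def basis_labels_def fun_eq_iff)
qed

lemma pauli_inj:
  assumes "D > 0" "psi \<in> qudit_space D n" "phi \<in> qudit_space D n"
    and eq: "pauli_op D n l x z psi = pauli_op D n l x z phi"
  shows "psi = phi"
proof
  fix k
  show "psi k = phi k"
  proof (cases "k \<in> basis_labels D n")
    case True
    define k' where "k' = label_shift D n k (\<lambda>i. D - x i mod D)"
    have "k' \<in> basis_labels D n" using label_shift_in_basis_labels[OF assms(1)] k'_def by simp
    moreover have "label_shift D n k' x = k" using label_shift_inverse[OF assms(1) True] k'_def by simp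
    ultimately have "pauli_op D n l x z psi k' = omega D ^ (l + (\<Sum>i<n. z i * ((k' i + x i) mod D))) * psi k"
       "pauli_op D n l x z phi k' = omega D ^ (l + (\<Sum>i<n. z i * ((k' i + x i) mod D))) * phi k"
      by (auto simp: pauli_op_def)
    then show ?thesis using eq omega_nz by (simp add: fun_eq_iff)
  next
    case False
    then show ?thesis using assms(2,3) by (auto simp: qudit_space_def)
  qed
qed

definition op_trace :: "nat \<Rightarrow> nat \<Rightarrow> (state \<Rightarrow> state) \<Rightarrow> complex" where
  "op_trace D n T = (\<Sum>k\<in>basis_labels D n. T (basis_vec k) k)"

lemma trace_pauli_X_part:
  assumes "i < n" "x i mod D \<noteq> 0"
  shows "op_trace D n (pauli_op D n l x z) = 0"
  unfolding op_trace_def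
proof (rule sum.neutral, intro ballI)
  fix k assume k: "k \<in> basis_labels D n"
  have "label_shift D n k x \<noteq> k"
  proof
    assume "label_shift D n k x = k"
    then have "(k i + x i) mod D = (k i + 0) mod D"
      using k assms(1) by (auto simp: label_shift_def fun_eq_iff basis_labels_def split: if_splits)
    then have "x i mod D = 0 mod D" by (rule mod_cancel_nat)
    then show False using assms(2) by simp
  qed
  then show "pauli_op D n l x z (basis_vec k) k = 0" by (simp add: pauli_op_def basis_vec_def)
qed

lemma label_shift_trivial:
  assumes "D > 0" "\<forall>i<n. x i mod D = 0" "k \<in> basis_labels D n"
  shows "label_shift D n k x = k" and "\<And>i. i < n \<Longrightarrow> (k i + x i) mod D = k i"
proof -
  show *: "(k i + x i) mod D = k i" if "i < n" for i
  proof -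
    have "(k i + x i) mod D = (k i + x i mod D) mod D" by (simp add: mod_add_right_eq)
    then show ?thesis using assms that by (simp add: basis_labels_def)
  qed
  show "label_shift D n k x = k"
    using assms * by (auto simp: label_shift_def fun_eq_iff basis_labels_def)
qed

text \<open>A diagonal Pauli operator with nontrivial Z-part has trace 0: shifting the j-th label
  by one permutes the basis and multiplies each diagonal entry by omega^(z j) \<noteq> 1.\<close>

lemma trace_pauli_Z_part:
  assumes "D > 0" "\<forall>i<n. x i mod D = 0" "j < n" "z j mod D \<noteq> 0"
  shows "op_trace D n (pauli_op D n l x z) = 0"
proof -
  define f where "f k = omega D ^ (l + (\<Sum>i<n. z i * k i))" for k :: "nat \<Rightarrow> nat"
  let ?B = "basis_labels D n"
  have tr_f: "op_trace D n (pauli_op D n l x z) = (\<Sum>k\<in>?B. f k)"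
    unfolding op_trace_def
  proof (rule sum.cong[OF refl])
    fix k assume k: "k \<in> ?B"
    have "(\<Sum>i<n. z i * ((k i + x i) mod D)) = (\<Sum>i<n. z i * k i)"
      using label_shift_trivial(2)[OF assms(1,2) k] by (intro sum.cong) auto
    then show "pauli_op D n l x z (basis_vec k) k = f k"
      using k label_shift_trivial(1)[OF assms(1,2) k] by (simp add: pauli_op_def basis_vec_def f_def)
  qed
  define sig where "sig k = k(j := (k j + 1) mod D)" for k :: "nat \<Rightarrow> nat"
  have sigB: "sig ` ?B \<subseteq> ?B" using assms(1,3) by (auto simp: sig_def basis_labels_def)
  have inj: "inj_on sig ?B"
  proof (rule inj_onI)
    fix k k' assume k: "k \<in> ?B" and k': "k' \<in> ?B" and e: "sig k = sig k'"
    then have "(k j + 1) mod D = (k' j + 1) mod D" unfolding sig_def by (metis fun_upd_same)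
    then have "(1 + k j) mod D = (1 + k' j) mod D" by (simp add: add.commute)
    then have "k j mod D = k' j mod D" by (rule mod_cancel_nat)
    then have "k j = k' j" using k k' assms(3) by (simp add: basis_labels_def)
    moreover have "\<forall>i. i \<noteq> j \<longrightarrow> k i = k' i" using e unfolding sig_def by (metis fun_upd_other)
    ultimately show "k = k'" by auto
  qed
  have img: "sig ` ?B = ?B" by (rule endo_inj_surj[OF finite_basis_labels[OF assms(1)] sigB inj])
  have f_sig: "f (sig k) = omega D ^ z j * f k" for k
  proof -
    let ?R = "\<Sum>i\<in>{..<n}-{j}. z i * k i"
    have "(\<Sum>i<n. z i * sig k i) = z j * sig k j + (\<Sum>i\<in>{..<n}-{j}. z i * sig k i)"
      using assms(3) by (simp add: sum.remove)
    also have "(\<Sum>i\<in>{..<n}-{j}. z i * sig k i) = ?R"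
      by (intro sum.cong) (auto simp: sig_def)
    finally have r1: "(\<Sum>i<n. z i * sig k i) = z j * ((k j + 1) mod D) + ?R"
      by (simp add: sig_def)
    have r2: "(\<Sum>i<n. z i * k i) = z j * k j + ?R"
      using assms(3) by (simp add: sum.remove)
    have "(z j * ((k j + 1) mod D)) mod D = (z j + z j * k j) mod D"
      by (simp add: mod_mult_right_eq algebra_simps)
    then have "(l + (z j * ((k j + 1) mod D) + ?R)) mod D = (l + ((z j + z j * k j) + ?R)) mod D"
      by (rule mod_add_cong[OF refl mod_add_cong[OF _ refl]])
    then have "(l + (\<Sum>i<n. z i * sig k i)) mod D = (z j + (l + (\<Sum>i<n. z i * k i))) mod D"
      unfolding r1 r2 by (simp add: algebra_simps)
    from omega_pow_cong[OF assms(1) this] show ?thesis unfolding f_def by (simp add: power_add)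
  qed
  have "(\<Sum>k\<in>?B. f k) = (\<Sum>k\<in>?B. f (sig k))"
    using sum.reindex[OF inj, of f] img by simp
  also have "\<dots> = omega D ^ z j * (\<Sum>k\<in>?B. f k)" using f_sig by (simp add: sum_distrib_left)
  finally have "(\<Sum>k\<in>?B. f k) = omega D ^ z j * (\<Sum>k\<in>?B. f k)" .
  moreover have "omega D ^ z j \<noteq> 1"
    using omega_pow_eq_1[OF assms(1)] assms(4) by (simp add: dvd_eq_mod_eq_0)
  ultimately show ?thesis using tr_f by (metis mult_cancel_right2)
qed

lemma pauli_scalar:
  assumes "D > 0" "\<forall>i<n. x i mod D = 0" "\<forall>i<n. z i mod D = 0"
  shows "pauli_op D n l x z psi = (\<lambda>k. if k \<in> basis_labels D n then omega D ^ l * psi k else 0)"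
proof
  fix k
  show "pauli_op D n l x z psi k = (if k \<in> basis_labels D n then omega D ^ l * psi k else 0)"
  proof (cases "k \<in> basis_labels D n")
    case True
    have "(\<Sum>i<n. z i * ((k i + x i) mod D)) mod D = (\<Sum>i<n. (z i mod D * ((k i + x i) mod D)) mod D) mod D"
      by (simp add: mod_sum_eq mod_mult_left_eq)
    also have "\<dots> = 0" using assms(3) by simp
    finally have "(l + (\<Sum>i<n. z i * ((k i + x i) mod D))) mod D = l mod D"
      by (metis add.right_neutral mod_add_right_eq)
    from omega_pow_cong[OF assms(1) this] show ?thesis
      using True label_shift_trivial(1)[OF assms(1,2) True] by (simp add: pauli_op_def)
  qed (simp add: pauli_op_def)
qed

lemma trace_pauli_identity:
  assumes "D > 0"
  shows "op_trace D n (pauli_op D n 0 (\<lambda>_. 0) (\<lambda>_. 0)) = of_nat (D ^ n)"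
proof -
  have "op_trace D n (pauli_op D n 0 (\<lambda>_. 0) (\<lambda>_. 0)) = (\<Sum>k\<in>basis_labels D n. 1)"
    unfolding op_trace_def using pauli_scalar[OF assms, of n "\<lambda>_. 0" "\<lambda>_. 0" 0]
    by (intro sum.cong) (auto simp: basis_vec_def)
  then show ?thesis by (simp add: card_basis_labels)
qed

text \<open>The trace of a linear projection onto a subspace C of the n-qudit space is dim C:
  expanding the diagonal entries in a basis of C, each basis vector contributes 1.\<close>

lemma trace_of_projection:
  assumes "D > 0" and CV: "C \<subseteq> qudit_space D n" and sub: "cs.subspace C"
    and into: "\<And>psi. P psi \<in> C" and on_C: "\<And>psi. psi \<in> C \<Longrightarrow> P psi = psi"
    and lin: "\<And>(A :: (nat \<Rightarrow> nat) set) c f. finite A \<Longrightarrow> P (\<Sum>k\<in>A. cscale (c k) (f k)) = (\<Sum>k\<in>A. cscale (c k) (P (f k)))"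
  shows "op_trace D n P = of_nat (cs.dim C)"
proof -
  let ?B = "basis_labels D n" and ?e = basis_vec
  obtain Bs where BsC: "Bs \<subseteq> C" and indep: "cs.independent Bs" and Cspan: "C \<subseteq> cs.span Bs"
    and cardBs: "card Bs = cs.dim C"
    using cs.basis_exists[of C] by blast
  have finB: "finite ?B" by (rule finite_basis_labels[OF assms(1)])
  have "Bs \<subseteq> cs.span (?e ` ?B)" using BsC CV qudit_space_finite_span[OF assms(1)] by blast
  then have finBs: "finite Bs"
    using cs.independent_span_bound[OF finite_imageI[OF finB] indep] by blast
  have spanC: "cs.span Bs = C" using cs.span_minimal[OF BsC sub] Cspan by auto
  let ?r = "cs.representation Bs"
  have Pe_span: "P (?e k) \<in> cs.span Bs" for k using into spanC by auto
  have rep: "P (?e k) = (\<Sum>b\<in>Bs. cscale (?r (P (?e k)) b) b)" for k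
    using cs.sum_representation_eq[OF indep Pe_span finBs subset_refl] by simp
  have "op_trace D n P = (\<Sum>k\<in>?B. \<Sum>b\<in>Bs. ?r (P (?e k)) b * b k)"
    unfolding op_trace_def by (intro sum.cong refl) (subst rep, simp add: sum_fun_apply cscale_def)
  also have "\<dots> = (\<Sum>b\<in>Bs. \<Sum>k\<in>?B. b k * ?r (P (?e k)) b)"
    by (simp add: sum.swap[of _ Bs] mult_ac)
  also have "\<dots> = (\<Sum>b\<in>Bs. 1)"
  proof (intro sum.cong refl)
    fix b assume bB: "b \<in> Bs"
    have "(\<Sum>k\<in>?B. b k * ?r (P (?e k)) b) = ?r (\<Sum>k\<in>?B. cscale (b k) (P (?e k))) b"
      using cs.representation_sum[OF indep, of ?B "\<lambda>k. cscale (b k) (P (?e k))"]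
        cs.representation_scale[OF indep Pe_span] cs.span_scale[OF Pe_span]
      by simp
    also have "(\<Sum>k\<in>?B. cscale (b k) (P (?e k))) = P (\<Sum>k\<in>?B. cscale (b k) (?e k))"
      by (rule lin[OF finB, symmetric])
    also have "\<dots> = P b" using basis_expansion[OF assms(1)] bB BsC CV by auto
    also have "P b = b" using on_C bB BsC by auto
    also have "?r b b = 1" using cs.representation_basis[OF indep bB] by simp
    finally show "(\<Sum>k\<in>?B. b k * ?r (P (?e k)) b) = 1" .
  qed
  finally show ?thesis using cardBs by simp
qed

lemma stabilizer_pauli:
  assumes "is_stabilizer_code D n C S" "s \<in> S"
  shows "\<exists>l x z. s = pauli_op D n l x z"
  using assms subgroup.subset[of S "pauli_group D n"]
  by (auto simp: is_stabilizer_code_def pauli_group_def)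

lemma stabilizer_finite:
  assumes "D > 0" "is_stabilizer_code D n C S"
  shows "finite S"
  using assms subgroup.subset[of S "pauli_group D n"] finite_pauli_group[OF assms(1)]
  by (auto simp: is_stabilizer_code_def intro: finite_subset)

lemma stabilizer_identity:
  assumes "is_stabilizer_code D n C S"
  shows "pauli_op D n 0 (\<lambda>_. 0) (\<lambda>_. 0) \<in> S"
  using assms subgroup.one_closed[of S "pauli_group D n"]
  by (simp add: is_stabilizer_code_def pauli_group_def)

lemma stabilizer_translate:
  assumes "D > 0" "is_stabilizer_code D n C S" "t \<in> S"
  shows "inj_on (\<lambda>s. t \<circ> s) S" and "(\<lambda>s. t \<circ> s) ` S = S"
proof -
  obtain l x z where t: "t = pauli_op D n l x z" using stabilizer_pauli[OF assms(2,3)] by auto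
  show inj: "inj_on (\<lambda>s. t \<circ> s) S"
  proof (rule inj_onI, rule ext)
    fix s s' phi assume "s \<in> S" "s' \<in> S" and e: "t \<circ> s = t \<circ> s'"
    then have "s phi \<in> qudit_space D n" "s' phi \<in> qudit_space D n"
      using stabilizer_pauli[OF assms(2)] pauli_in_qudit_space by metis+
    moreover have "t (s phi) = t (s' phi)" using e by (metis comp_apply)
    ultimately show "s phi = s' phi" using pauli_inj[OF assms(1)] t by blast
  qed
  have "t \<circ> s \<in> S" if "s \<in> S" for s
    using assms(2,3) that subgroup.m_closed[of S "pauli_group D n"]
    by (simp add: is_stabilizer_code_def pauli_group_def)
  then show "(\<lambda>s. t \<circ> s) ` S = S"
    by (intro endo_inj_surj[OF stabilizer_finite[OF assms(1,2)] _ inj]) auto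
qed

text \<open>Every stabilizer element other than the identity is traceless; for scalar elements this
  uses that they fix a nonzero code vector.\<close>

lemma stabilizer_trace_nontrivial:
  assumes "D > 0" "is_stabilizer_code D n C S" "psi0 \<in> C" "psi0 \<noteq> 0"
    and "s \<in> S" "s \<noteq> pauli_op D n 0 (\<lambda>_. 0) (\<lambda>_. 0)"
  shows "op_trace D n s = 0"
proof -
  obtain l x z where s: "s = pauli_op D n l x z" using stabilizer_pauli[OF assms(2,5)] by auto
  consider i where "i < n" "x i mod D \<noteq> 0"
    | j where "\<forall>i<n. x i mod D = 0" "j < n" "z j mod D \<noteq> 0"
    | "\<forall>i<n. x i mod D = 0" "\<forall>i<n. z i mod D = 0"
    by blast
  then show ?thesis
  proof cases
    case 1 then show ?thesis using trace_pauli_X_part s by blast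
  next
    case 2 then show ?thesis using trace_pauli_Z_part[OF assms(1)] s by blast
  next
    case 3
    let ?B = "basis_labels D n"
    have scalar: "s psi = (\<lambda>k. if k \<in> ?B then omega D ^ l * psi k else 0)" for psi
      using pauli_scalar[OF assms(1) 3] s by auto
    obtain k0 where k0: "psi0 k0 \<noteq> 0" using assms(4) by (auto simp: fun_eq_iff)
    have "k0 \<in> ?B" using k0 assms(2,3) by (auto simp: is_stabilizer_code_def qudit_space_def)
    moreover have "s psi0 = psi0" using assms(2,3,5) by (auto simp: is_stabilizer_code_def)
    ultimately have "omega D ^ l * psi0 k0 = psi0 k0" using scalar[of psi0] by metis
    then have "omega D ^ l = 1" using k0 by simp
    then have "s = pauli_op D n 0 (\<lambda>_. 0) (\<lambda>_. 0)"
      using scalar pauli_scalar[OF assms(1), of n "\<lambda>_. 0" "\<lambda>_. 0" 0] by (simp add: fun_eq_iff)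
    then show ?thesis using assms(6) by simp
  qed
qed

lemma stabilizer_trace_sum:
  assumes "D > 0" "is_stabilizer_code D n C S" "psi0 \<in> C" "psi0 \<noteq> 0"
  shows "(\<Sum>s\<in>S. op_trace D n s) = of_nat (D ^ n)"
proof -
  let ?one = "pauli_op D n 0 (\<lambda>_. 0) (\<lambda>_. 0)"
  have "(\<Sum>s\<in>S. op_trace D n s) = op_trace D n ?one + (\<Sum>s\<in>S - {?one}. op_trace D n s)"
    using stabilizer_finite[OF assms(1,2)] stabilizer_identity[OF assms(2)] by (simp add: sum.remove)
  also have "(\<Sum>s\<in>S - {?one}. op_trace D n s) = 0"
    using stabilizer_trace_nontrivial[OF assms] by (intro sum.neutral) auto
  finally show ?thesis using trace_pauli_identity[OF assms(1)] by simp
qed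

definition avg_op :: "(state \<Rightarrow> state) set \<Rightarrow> state \<Rightarrow> state" where
  "avg_op S psi = cscale (1 / of_nat (card S)) (\<Sum>s\<in>S. s psi)"

lemma avg_op_apply: "avg_op S psi k = (1 / of_nat (card S)) * (\<Sum>s\<in>S. s psi k)"
  by (simp add: avg_op_def cscale_def sum_fun_apply)

lemma trace_avg_op: "op_trace D n (avg_op S) = (\<Sum>s\<in>S. op_trace D n s) / of_nat (card S)"
  unfolding op_trace_def avg_op_apply by (simp add: sum_divide_distrib sum.swap[of _ S])

lemma avg_op_lincomb:
  assumes "is_stabilizer_code D n C S"
  shows "avg_op S (\<Sum>k\<in>A. cscale (c k) (f k)) = (\<Sum>k\<in>A. cscale (c k) (avg_op S (f k)))"
proof
  fix q
  have "s (\<Sum>k\<in>A. cscale (c k) (f k)) q = (\<Sum>k\<in>A. c k * s (f k) q)" if sS: "s \<in> S" for s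
  proof -
    obtain l x z where "s = pauli_op D n l x z" using stabilizer_pauli[OF assms sS] by auto
    then have "s (\<Sum>k\<in>A. cscale (c k) (f k)) = (\<Sum>k\<in>A. cscale (c k) (s (f k)))"
      by (simp add: pauli_lincomb)
    then show ?thesis by (simp add: sum_fun_apply cscale_def)
  qed
  then have "avg_op S (\<Sum>k\<in>A. cscale (c k) (f k)) q
      = (1 / of_nat (card S)) * (\<Sum>s\<in>S. \<Sum>k\<in>A. c k * s (f k) q)"
    unfolding avg_op_apply by simp
  also have "\<dots> = (\<Sum>k\<in>A. c k * ((1 / of_nat (card S)) * (\<Sum>s\<in>S. s (f k) q)))"
    by (simp add: sum_distrib_left sum.swap[of _ S] mult_ac)
  also have "\<dots> = (\<Sum>k\<in>A. cscale (c k) (avg_op S (f k))) q"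
    by (simp add: sum_fun_apply cscale_def avg_op_apply)
  finally show "avg_op S (\<Sum>k\<in>A. cscale (c k) (f k)) q = (\<Sum>k\<in>A. cscale (c k) (avg_op S (f k))) q" .
qed

lemma avg_op_fixes_code:
  assumes "D > 0" "is_stabilizer_code D n C S" "psi \<in> C"
  shows "avg_op S psi = psi"
proof -
  have "s psi = psi" if "s \<in> S" for s using assms that by (auto simp: is_stabilizer_code_def)
  then have "(\<Sum>s\<in>S. s psi k) = of_nat (card S) * psi k" for k by simp
  moreover have "card S > 0"
    using stabilizer_finite[OF assms(1,2)] stabilizer_identity[OF assms(2)] card_gt_0_iff by blast
  ultimately show ?thesis by (simp add: fun_eq_iff avg_op_apply)
qed

lemma avg_op_into_code:
  assumes "D > 0" "is_stabilizer_code D n C S"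
  shows "avg_op S psi \<in> C"
proof -
  have "s psi k = 0" if "s \<in> S" "k \<notin> basis_labels D n" for s k
    using stabilizer_pauli[OF assms(2) that(1)] pauli_in_qudit_space that(2)
    unfolding qudit_space_def by blast
  then have "avg_op S psi \<in> qudit_space D n"
    unfolding qudit_space_def by (auto simp: avg_op_apply intro!: sum.neutral)
  moreover have "t (avg_op S psi) = avg_op S psi" if tS: "t \<in> S" for t
  proof -
    obtain l x z where t: "t = pauli_op D n l x z" using stabilizer_pauli[OF assms(2) tS] by auto
    have "t (\<Sum>s\<in>S. s psi) = (\<Sum>s\<in>S. (t \<circ> s) psi)"
      using t by (simp add: pauli_sum)
    also have "\<dots> = (\<Sum>s\<in>(\<lambda>s. t \<circ> s) ` S. s psi)"
      using sum.reindex[OF stabilizer_translate(1)[OF assms tS], of "\<lambda>s. s psi"] by (simp add: o_def)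
    also have "\<dots> = (\<Sum>s\<in>S. s psi)" using stabilizer_translate(2)[OF assms tS] by simp
    finally show ?thesis
      unfolding avg_op_def t by (simp add: pauli_scale)
  qed
  ultimately show ?thesis using assms(2) by (auto simp: is_stabilizer_code_def)
qed

lemma nonzero_of_dim_pos:
  assumes "cs.dim C \<ge> 1"
  obtains psi where "psi \<in> C" "psi \<noteq> 0"
proof -
  have "\<not> C \<subseteq> {0}"
  proof
    assume "C \<subseteq> {0}"
    then have "C \<subseteq> cs.span {}" by (simp add: cs.span_empty)
    then show False using cs.dim_le_card[of C "{}"] assms by simp
  qed
  then show ?thesis using that by auto
qed

theorem theorem1:
  fixes D n K :: nat
    and C :: "((nat \<Rightarrow> nat) \<Rightarrow> complex) set"
    and S :: "(((nat \<Rightarrow> nat) \<Rightarrow> complex) \<Rightarrow> ((nat \<Rightarrow> nat) \<Rightarrow> complex)) set"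
  assumes "D \<ge> 2" and "n \<ge> 1"
    and "is_stabilizer_code D n C S"
    and "vector_space.dim cscale C = K" and "K \<ge> 1"
  shows "K * card S = D ^ n"
proof -
  have D0: "D > 0" using assms(1) by simp
  obtain psi0 where "psi0 \<in> C" "psi0 \<noteq> 0" using nonzero_of_dim_pos assms(4,5) by auto
  then have "op_trace D n (avg_op S) = of_nat (D ^ n) / of_nat (card S)"
    using trace_avg_op stabilizer_trace_sum[OF D0 assms(3)] by simp
  moreover have "op_trace D n (avg_op S) = of_nat K"
    using trace_of_projection[OF D0 _ _ avg_op_into_code[OF D0 assms(3)]
        avg_op_fixes_code[OF D0 assms(3)] avg_op_lincomb[OF assms(3)]] assms(3,4)
    by (simp add: is_stabilizer_code_def)
  moreover have "card S > 0"
    using stabilizer_finite[OF D0 assms(3)] stabilizer_identity[OF assms(3)] card_gt_0_iff by blast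
  ultimately have "(of_nat (K * card S) :: complex) = of_nat (D ^ n)"
    by (simp add: field_simps)
  then show ?thesis using of_nat_eq_iff by blast
qed

end
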